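(* Let $N$ be a closed normal subgroup of a compact group $G$ and $n\ge1$. Then $d^{(n)}(G)\le d^{(n)}(G/N)$.
   Context: For a compact group $X$, $\mu_X$ denotes its normalized Haar measure and $\mu_X^m$ the product measure on $X^m$. Commutators: $[x,y]=x^{-1}y^{-1}xy$, $[x_1,\dots,x_{k+1}]=[[x_1,\dots,x_k],x_{k+1}]$. For a compact group $X$, $d^{(n)}(X)=\mu_X^{n+1}(\{(x_1,\dots,x_{n+1})\in X^{n+1}: [x_1,\dots,x_{n+1}]=1\})$. *)

theory Defs
  imports "HOL-Analysis.Analysis" "HOL-Algebra.Algebra"
begin

definition topological_group :: "('a, 'b) monoid_scheme \<Rightarrow> 'a topology \<Rightarrow> bool" where
  "topological_group G T \<longleftrightarrow>
     group G \<and> topspace T = carrier G \<and>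
     continuous_map (prod_topology T T) T (\<lambda>(x, y). x \<otimes>\<^bsub>G\<^esub> y) \<and>
     continuous_map T T (\<lambda>x. inv\<^bsub>G\<^esub> x)"

definition compact_group :: "('a, 'b) monoid_scheme \<Rightarrow> 'a topology \<Rightarrow> bool" where
  "compact_group G T \<longleftrightarrow> topological_group G T \<and> compact_space T \<and> Hausdorff_space T"

definition quot_topology :: "('a, 'b) monoid_scheme \<Rightarrow> 'a topology \<Rightarrow> 'a set \<Rightarrow> 'a set topology" where
  "quot_topology G T N = topology (\<lambda>U. U \<subseteq> rcosets\<^bsub>G\<^esub> N \<and> openin T (\<Union>U))"

text \<open>Normalized Haar measure of a compact group: a Radon (outer regular on Borel sets,
inner regular by compact sets on open sets) probability measure on the Borel sets of T,
invariant under left translations.\<close>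

definition haar_measure :: "('a, 'b) monoid_scheme \<Rightarrow> 'a topology \<Rightarrow> 'a measure \<Rightarrow> bool" where
  "haar_measure G T M \<longleftrightarrow>
     space M = topspace T \<and>
     sets M = sigma_sets (topspace T) {U. openin T U} \<and>
     emeasure M (topspace T) = 1 \<and>
     (\<forall>g\<in>carrier G. \<forall>A\<in>sets M. emeasure M ((\<lambda>x. g \<otimes>\<^bsub>G\<^esub> x) ` A) = emeasure M A) \<and>
     (\<forall>A\<in>sets M. emeasure M A = (INF U\<in>{U. openin T U \<and> A \<subseteq> U}. emeasure M U)) \<and>
     (\<forall>U. openin T U \<longrightarrow> emeasure M U = (SUP K\<in>{K. compactin T K \<and> K \<subseteq> U}. emeasure M K))"

text \<open>Commutators [x,y] = x^-1 y^-1 x y and left-normed iterated commutators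
[x_0, ..., x_k] = [[x_0, ..., x_(k-1)], x_k] (indices shifted to start at 0).\<close>

definition comm :: "('a, 'b) monoid_scheme \<Rightarrow> 'a \<Rightarrow> 'a \<Rightarrow> 'a" where
  "comm G x y = inv\<^bsub>G\<^esub> x \<otimes>\<^bsub>G\<^esub> inv\<^bsub>G\<^esub> y \<otimes>\<^bsub>G\<^esub> x \<otimes>\<^bsub>G\<^esub> y"

fun iter_comm :: "('a, 'b) monoid_scheme \<Rightarrow> (nat \<Rightarrow> 'a) \<Rightarrow> nat \<Rightarrow> 'a" where
  "iter_comm G x 0 = x 0"
| "iter_comm G x (Suc k) = comm G (iter_comm G x k) (x (Suc k))"

text \<open>The power X^(n+1) as a compact group (tuples indexed by {0..n}) with product topology.\<close>

definition pow_group :: "('a, 'b) monoid_scheme \<Rightarrow> nat \<Rightarrow> (nat \<Rightarrow> 'a) monoid" where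
  "pow_group G n = product_group {0..n} (\<lambda>_. G)"

definition pow_topology :: "'a topology \<Rightarrow> nat \<Rightarrow> (nat \<Rightarrow> 'a) topology" where
  "pow_topology T n = product_topology (\<lambda>_. T) {0..n}"

definition comm_degree :: "('a, 'b) monoid_scheme \<Rightarrow> nat \<Rightarrow> (nat \<Rightarrow> 'a) measure \<Rightarrow> real" where
  "comm_degree G n M =
     measure M {x \<in> carrier (pow_group G n). iter_comm G x n = \<one>\<^bsub>G\<^esub>}"

end

theory Submission
  imports Defs
begin

text \<open>The quotient map \<open>G \<rightarrow> G/N\<close> induces a continuous surjective homomorphism \<open>\<pi>\<close> from
  the \<open>(n+1)\<close>-th power of \<open>G\<close> to that of \<open>G/N\<close>, which maps tuples with trivial iterated commutator into the
  closed set \<open>D\<close> of such tuples of the quotient. Haar measure is pushed forward to Haar measure,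
  \<open>\<integral> f d\<nu> = \<integral> f \<circ> \<pi> d\<mu>\<close> for continuous \<open>f\<close>: apply Fubini's theorem to \<open>f (\<pi>(x)\<inverse> y)\<close> and use left
  invariance in each variable. Approximating the indicator of \<open>D\<close> from above by Urysohn functions,
  using outer regularity of \<open>\<nu>\<close>, bounds the measure of the commuting tuples of \<open>G\<close> by \<open>\<nu>(D) + \<epsilon>\<close>
  for every \<open>\<epsilon> > 0\<close>.\<close>

lemma continuous_map_real_bounded:
  assumes "compact_space S" "continuous_map S euclideanreal f"
  obtains B where "\<And>x. x \<in> topspace S \<Longrightarrow> \<bar>f x\<bar> \<le> B"
proof -
  have "compact (f ` topspace S)"
    using image_compactin[OF _ assms(2)] assms(1) by (simp add: compact_space_def)
  then show ?thesis
    using that compact_imp_bounded by (force simp: bounded_real)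
qed

lemma compact_space_continuous_surj:
  "compact_space S \<Longrightarrow> continuous_map S S' f \<Longrightarrow> f ` topspace S = topspace S' \<Longrightarrow> compact_space S'"
  by (metis compact_space_def image_compactin)

lemma open_map_prod:
  assumes f: "open_map X1 X2 f" and g: "open_map Y1 Y2 g"
  shows "open_map (prod_topology X1 Y1) (prod_topology X2 Y2) (\<lambda>(x, y). (f x, g y))"
  unfolding open_map_def
proof (intro allI impI)
  fix U assume U: "openin (prod_topology X1 Y1) U"
  show "openin (prod_topology X2 Y2) ((\<lambda>(x, y). (f x, g y)) ` U)"
  proof (subst openin_subopen, intro ballI)
    fix z assume "z \<in> (\<lambda>(x, y). (f x, g y)) ` U"
    then obtain x y where xy: "(x, y) \<in> U" "z = (f x, g y)" by auto
    obtain V W where VW: "openin X1 V" "openin Y1 W" "x \<in> V" "y \<in> W" "V \<times> W \<subseteq> U"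
      using U[unfolded openin_prod_topology_alt, rule_format, OF xy(1)] by blast
    have "openin (prod_topology X2 Y2) (f ` V \<times> g ` W)"
      using VW f g by (simp add: openin_prod_Times_iff open_map_def)
    moreover have "f ` V \<times> g ` W \<subseteq> (\<lambda>(x, y). (f x, g y)) ` U"
      using VW(5) by force
    ultimately show "\<exists>T. openin (prod_topology X2 Y2) T \<and> z \<in> T \<and> T \<subseteq> (\<lambda>(x, y). (f x, g y)) ` U"
      using xy VW by blast
  qed
qed

lemma topological_group_group: "topological_group G T \<Longrightarrow> group G"
  and topological_group_topspace: "topological_group G T \<Longrightarrow> topspace T = carrier G"
  by (simp_all add: topological_group_def)

lemma continuous_map_group_mult:
  assumes "topological_group G T" "continuous_map Z T f" "continuous_map Z T g"
  shows "continuous_map Z T (\<lambda>z. f z \<otimes>\<^bsub>G\<^esub> g z)"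
proof -
  have "continuous_map Z (prod_topology T T) (\<lambda>z. (f z, g z))"
    using assms by (simp add: continuous_map_paired)
  with assms(1) show ?thesis
    using continuous_map_compose by (fastforce simp: topological_group_def o_def)
qed

lemma continuous_map_group_inv:
  assumes "topological_group G T" "continuous_map Z T f"
  shows "continuous_map Z T (\<lambda>z. inv\<^bsub>G\<^esub> f z)"
  using assms continuous_map_compose[OF assms(2)]
  by (fastforce simp: topological_group_def o_def)

lemma continuous_map_group_const:
  "topological_group G T \<Longrightarrow> c \<in> carrier G \<Longrightarrow> continuous_map Z T (\<lambda>z. c)"
  by (simp add: topological_group_topspace)

lemma continuous_map_left_translation:
  "topological_group G T \<Longrightarrow> c \<in> carrier G \<Longrightarrow> continuous_map T T (\<lambda>x. c \<otimes>\<^bsub>G\<^esub> x)"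
  by (intro continuous_map_group_mult continuous_map_group_const continuous_map_id[unfolded id_def])

lemma openin_left_translation:
  fixes G (structure)
  assumes tg: "topological_group G T" and U: "openin T U" and h: "h \<in> carrier G"
  shows "openin T ((\<lambda>x. h \<otimes> x) ` U)"
proof -
  interpret group G using topological_group_group[OF tg] .
  have top: "topspace T = carrier G" using topological_group_topspace[OF tg] .
  have "openin T {x \<in> topspace T. inv h \<otimes> x \<in> U}"
    using continuous_map_left_translation[OF tg inv_closed[OF h]] U
    by (rule openin_continuous_map_preimage)
  moreover have "{x \<in> topspace T. inv h \<otimes> x \<in> U} = (\<lambda>x. h \<otimes> x) ` U"
  proof safe
    fix x assume "x \<in> topspace T" "inv h \<otimes> x \<in> U"
    then show "x \<in> (\<lambda>x. h \<otimes> x) ` U"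
      using h top by (intro image_eqI[of _ _ "inv h \<otimes> x"]) (auto simp: m_assoc[symmetric])
  next
    fix u assume "u \<in> U"
    then show "h \<otimes> u \<in> topspace T" "inv h \<otimes> (h \<otimes> u) \<in> U"
      using openin_subset[OF U] h top by (auto simp: m_assoc[symmetric])
  qed
  ultimately show ?thesis by simp
qed

lemma equicontinuous_translates:
  fixes G (structure) and h :: "'a \<Rightarrow> real"
  assumes tg: "topological_group G T" and T: "compact_space T"
    and h: "continuous_map T euclideanreal h"
    and x0: "x0 \<in> carrier G" and e: "e > 0"
  obtains V where "openin T V" "x0 \<in> V"
    "\<And>x g. x \<in> V \<Longrightarrow> g \<in> carrier G \<Longrightarrow> \<bar>h (inv x \<otimes> g) - h (inv x0 \<otimes> g)\<bar> < e"
proof -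
  interpret group G using topological_group_group[OF tg] .
  have top: "topspace T = carrier G" using topological_group_topspace[OF tg] .
  define \<Phi> where "\<Phi> z = \<bar>h (inv (fst z) \<otimes> snd z) - h (inv x0 \<otimes> snd z)\<bar>" for z
  have c1: "continuous_map (prod_topology T T) T (\<lambda>z. inv (fst z) \<otimes> snd z)"
    by (intro continuous_map_group_mult[OF tg] continuous_map_group_inv[OF tg]
        continuous_map_fst continuous_map_snd)
  have c2: "continuous_map (prod_topology T T) T (\<lambda>z. inv x0 \<otimes> snd z)"
    by (intro continuous_map_group_mult[OF tg] continuous_map_group_const[OF tg]
        continuous_map_snd inv_closed x0)
  have c\<Phi>: "continuous_map (prod_topology T T) euclideanreal \<Phi>"
    unfolding \<Phi>_def
    by (intro continuous_map_real_abs continuous_map_diff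
        continuous_map_compose[OF c1 h, unfolded o_def] continuous_map_compose[OF c2 h, unfolded o_def])
  have W: "openin (prod_topology T T) {z \<in> topspace (prod_topology T T). \<Phi> z \<in> {..<e}}"
    by (rule openin_continuous_map_preimage[OF c\<Phi>]) simp
  have "x0 \<in> topspace T" "{x0} \<times> topspace T \<subseteq> {z \<in> topspace (prod_topology T T). \<Phi> z \<in> {..<e}}"
    using x0 top e by (auto simp: \<Phi>_def)
  from tube_lemma_right[OF W T[unfolded compact_space_def] this]
  obtain U V where UV: "openin T U" "x0 \<in> U" "topspace T \<subseteq> V"
      "U \<times> V \<subseteq> {z \<in> topspace (prod_topology T T). \<Phi> z \<in> {..<e}}"
    by blast
  show ?thesis
  proof (rule that[OF UV(1,2)])
    fix x g assume "x \<in> U" "g \<in> carrier G"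
    then have "(x, g) \<in> U \<times> V" using UV(3) top by auto
    then have "\<Phi> (x, g) < e" using UV(4) by blast
    then show "\<bar>h (inv x \<otimes> g) - h (inv x0 \<otimes> g)\<bar> < e"
      by (simp add: \<Phi>_def)
  qed
qed

definition has_borel_sets :: "'a topology \<Rightarrow> 'a measure \<Rightarrow> bool" where
  "has_borel_sets S M \<longleftrightarrow> space M = topspace S \<and> sets M = sigma_sets (topspace S) {U. openin S U}"

lemma has_borel_sets_openin: "has_borel_sets S M \<Longrightarrow> openin S U \<Longrightarrow> U \<in> sets M"
  unfolding has_borel_sets_def by auto

lemma has_borel_sets_closedin:
  assumes M: "has_borel_sets S M" and U: "closedin S U"
  shows "U \<in> sets M"
proof -
  have "space M - (topspace S - U) \<in> sets M"
    using has_borel_sets_openin[OF M] U by blast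
  moreover have "space M - (topspace S - U) = U"
    using M closedin_subset[OF U] unfolding has_borel_sets_def by auto
  ultimately show ?thesis by simp
qed

lemma continuous_map_measurable:
  assumes M: "has_borel_sets S M" and M': "has_borel_sets S' M'" and f: "continuous_map S S' f"
  shows "f \<in> measurable M M'"
proof (rule measurable_sigma_sets)
  show "sets M' = sigma_sets (topspace S') {U. openin S' U}"
    using M' by (simp add: has_borel_sets_def)
  show "{U. openin S' U} \<subseteq> Pow (topspace S')" using openin_subset by auto
  show "f \<in> space M \<rightarrow> topspace S'"
    using M f by (auto simp: has_borel_sets_def continuous_map_def)
  fix U assume "U \<in> {U. openin S' U}"
  then have "openin S {x \<in> topspace S. f x \<in> U}"
    using f openin_continuous_map_preimage by auto
  moreover have "f -` U \<inter> space M = {x \<in> topspace S. f x \<in> U}"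
    using M by (auto simp: has_borel_sets_def)
  ultimately show "f -` U \<inter> space M \<in> sets M" using has_borel_sets_openin[OF M] by simp
qed

lemma continuous_map_borel_measurable:
  assumes M: "has_borel_sets S M" and f: "continuous_map S euclideanreal f"
  shows "f \<in> borel_measurable M"
proof (rule borel_measurableI)
  fix V :: "real set" assume "open V"
  then have "openin S {x \<in> topspace S. f x \<in> V}"
    using openin_continuous_map_preimage[OF f] by (metis open_openin)
  moreover have "f -` V \<inter> space M = {x \<in> topspace S. f x \<in> V}"
    using M by (auto simp: has_borel_sets_def)
  ultimately show "f -` V \<inter> space M \<in> sets M" using has_borel_sets_openin[OF M] by simp
qed

definition left_invariant_prob :: "('a, 'b) monoid_scheme \<Rightarrow> 'a topology \<Rightarrow> 'a measure \<Rightarrow> bool" where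
  "left_invariant_prob G T M \<longleftrightarrow> has_borel_sets T M \<and> emeasure M (topspace T) = 1 \<and>
     (\<forall>g\<in>carrier G. \<forall>A\<in>sets M. emeasure M ((\<lambda>x. g \<otimes>\<^bsub>G\<^esub> x) ` A) = emeasure M A)"

lemma haar_measure_left_invariant_prob: "haar_measure G T M \<Longrightarrow> left_invariant_prob G T M"
  by (simp add: haar_measure_def left_invariant_prob_def has_borel_sets_def)

lemma left_invariant_prob_has_borel_sets: "left_invariant_prob G T M \<Longrightarrow> has_borel_sets T M"
  by (simp add: left_invariant_prob_def)

lemma left_invariant_prob_finite_measure: "left_invariant_prob G T M \<Longrightarrow> finite_measure M"
  by (rule finite_measureI) (simp add: left_invariant_prob_def has_borel_sets_def)

lemma left_invariant_prob_measure_space: "left_invariant_prob G T M \<Longrightarrow> measure M (space M) = 1"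
  by (simp add: left_invariant_prob_def has_borel_sets_def measure_def)

lemma left_invariant_prob_space:
  "left_invariant_prob G T M \<Longrightarrow> topological_group G T \<Longrightarrow> space M = carrier G"
  by (simp add: left_invariant_prob_def has_borel_sets_def topological_group_topspace)

lemma integral_left_translation:
  fixes G (structure) and \<phi> :: "'a \<Rightarrow> real"
  assumes tg: "topological_group G T" and M: "left_invariant_prob G T M" and c: "c \<in> carrier G"
    and \<phi>: "\<phi> \<in> borel_measurable M"
  shows "(\<integral>x. \<phi> (c \<otimes> x) \<partial>M) = integral\<^sup>L M \<phi>"
proof -
  interpret group G using topological_group_group[OF tg] .
  have B: "has_borel_sets T M" using left_invariant_prob_has_borel_sets[OF M] .
  have sp: "space M = carrier G" using left_invariant_prob_space[OF M tg] .
  have meas: "(\<lambda>x. c \<otimes> x) \<in> measurable M M"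
    using continuous_map_measurable[OF B B continuous_map_left_translation[OF tg c]] .
  have "distr M M (\<lambda>x. c \<otimes> x) = M"
  proof (rule measure_eqI)
    fix A assume "A \<in> sets (distr M M (\<lambda>x. c \<otimes> x))"
    then have A: "A \<in> sets M" "A \<subseteq> carrier G" using sets.sets_into_space sp by auto
    have "(\<lambda>x. c \<otimes> x) -` A \<inter> space M = (\<lambda>x. inv c \<otimes> x) ` A"
    proof (intro equalityI subsetI)
      fix x assume "x \<in> (\<lambda>x. c \<otimes> x) -` A \<inter> space M"
      then show "x \<in> (\<lambda>x. inv c \<otimes> x) ` A"
        using c sp by (intro image_eqI[of _ _ "c \<otimes> x"]) (auto simp: m_assoc[symmetric])
    next
      fix x assume "x \<in> (\<lambda>x. inv c \<otimes> x) ` A"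
      then show "x \<in> (\<lambda>x. c \<otimes> x) -` A \<inter> space M"
        using A c sp by (auto simp: m_assoc[symmetric])
    qed
    then show "emeasure (distr M M (\<lambda>x. c \<otimes> x)) A = emeasure M A"
      using M A c by (simp add: emeasure_distr[OF meas] left_invariant_prob_def)
  qed simp
  then show ?thesis
    using integral_distr[OF meas \<phi>] by metis
qed

lemma Urysohn_integral_le_measure:
  assumes M: "has_borel_sets S M" "finite_measure M" and S: "normal_space S"
    and outer: "\<forall>A\<in>sets M. emeasure M A = (INF U\<in>{U. openin S U \<and> A \<subseteq> U}. emeasure M U)"
    and D: "closedin S D" and e: "e > 0"
  obtains f where "continuous_map S euclideanreal f" "\<And>x. x \<in> topspace S \<Longrightarrow> f x \<in> {0..1}"
    "\<And>x. x \<in> D \<Longrightarrow> f x = 1" "integral\<^sup>L M f \<le> measure M D + e"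
proof -
  interpret finite_measure M by fact
  have spM: "space M = topspace S" using M(1) by (simp add: has_borel_sets_def)
  have "emeasure M D < emeasure M D + ennreal e"
    using e emeasure_eq_measure by (simp add: ennreal_add_left_cancel_less)
  then have "(INF U\<in>{U. openin S U \<and> D \<subseteq> U}. emeasure M U) < emeasure M D + ennreal e"
    using outer has_borel_sets_closedin[OF M(1) D] by simp
  then obtain U where U: "openin S U" "D \<subseteq> U" "emeasure M U < emeasure M D + ennreal e"
    unfolding INF_less_iff by blast
  have "ennreal (measure M U) < ennreal (measure M D + e)"
    using U(3) e by (simp add: emeasure_eq_measure ennreal_plus)
  then have U_le: "measure M U \<le> measure M D + e"
    by (simp add: ennreal_less_iff)
  have U_sets: "U \<in> sets M" using has_borel_sets_openin[OF M(1) U(1)] .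
  obtain f where f: "continuous_map S (top_of_set {0..1::real}) f"
      "f ` (topspace S - U) \<subseteq> {0}" "f ` D \<subseteq> {1}"
    using Urysohn_lemma[OF S _ D, of "topspace S - U" 0 1] U(1,2)
    by (auto simp: disjnt_def)
  have f01: "f x \<in> {0..1}" if "x \<in> topspace S" for x
    using f(1) that by (auto simp: continuous_map_def)
  have f_cont: "continuous_map S euclideanreal f"
    using f(1) continuous_map_in_subtopology by blast
  have "integral\<^sup>L M f \<le> (\<integral>x. indicator U x \<partial>M)"
  proof (rule integral_mono)
    show "integrable M (indicator U :: _ \<Rightarrow> real)"
      using U_sets by (intro integrable_real_indicator) (auto simp: emeasure_eq_measure)
    show "integrable M f"
    proof (rule integrable_const_bound[where B=1])
      show "AE x in M. norm (f x) \<le> 1" using f01 spM by (intro AE_I2) fastforce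
    qed (fact continuous_map_borel_measurable[OF M(1) f_cont])
    fix x assume "x \<in> space M"
    then show "f x \<le> indicator U x"
      using f01 f(2) spM by (cases "x \<in> U") auto
  qed
  also have "\<dots> = measure M U"
    using U_sets sets.sets_into_space[OF U_sets] by (simp add: Int_absorb2)
  finally show ?thesis
    using that[OF f_cont f01] f(3) U_le by force
qed

section \<open>Fubini's theorem for equicontinuous families\<close>

fun cover_pick :: "('a \<Rightarrow> 'a set) \<Rightarrow> ('a \<Rightarrow> 'c \<Rightarrow> real) \<Rightarrow> 'a list \<Rightarrow> 'a \<Rightarrow> 'c \<Rightarrow> real" where
  "cover_pick V F [] x y = 0"
| "cover_pick V F (p # ps) x y = (if x \<in> V p then F p y else cover_pick V F ps x y)"

lemma cover_pick_in_cover: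
  "x \<in> \<Union>(V ` set ps) \<Longrightarrow> \<exists>p\<in>set ps. x \<in> V p \<and> cover_pick V F ps x y = F p y"
  by (induction ps) auto

lemma cover_pick_measurable:
  assumes "\<And>p. p \<in> set ps \<Longrightarrow> V p \<in> sets M"
    and "\<And>p. p \<in> set ps \<Longrightarrow> F p \<in> borel_measurable N"
  shows "(\<lambda>z. cover_pick V F ps (fst z) (snd z)) \<in> borel_measurable (M \<Otimes>\<^sub>M N)"
  using assms
proof (induction ps)
  case (Cons p ps)
  have "{z \<in> space (M \<Otimes>\<^sub>M N). fst z \<in> V p} = V p \<times> space N"
    using Cons.prems(1)[of p] sets.sets_into_space by (force simp: space_pair_measure)
  then have "{z \<in> space (M \<Otimes>\<^sub>M N). fst z \<in> V p} \<in> sets (M \<Otimes>\<^sub>M N)"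
    using Cons.prems(1)[of p] by auto
  moreover have "(\<lambda>z. F p (snd z)) \<in> borel_measurable (M \<Otimes>\<^sub>M N)"
    using measurable_compose[OF measurable_snd Cons.prems(2)[of p]] by simp
  ultimately show ?case
    using Cons by (simp only: cover_pick.simps) (rule measurable_If; auto)
qed simp

lemma compact_space_equicontinuous_covers:
  assumes S: "compact_space S"
    and eq: "\<And>x0 e. x0 \<in> topspace S \<Longrightarrow> e > 0 \<Longrightarrow>
       \<exists>V. openin S V \<and> x0 \<in> V \<and> (\<forall>x\<in>V. \<forall>y\<in>Y. \<bar>F x y - F x0 y\<bar> < e)"
  obtains V :: "nat \<Rightarrow> 'a \<Rightarrow> 'a set" and ps where "\<And>m. set (ps m) \<subseteq> topspace S"
    "\<And>m p. p \<in> set (ps m) \<Longrightarrow> openin S (V m p)" "\<And>m. topspace S \<subseteq> \<Union>(V m ` set (ps m))"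
    "\<And>m p x y. p \<in> set (ps m) \<Longrightarrow> x \<in> V m p \<Longrightarrow> y \<in> Y \<Longrightarrow> \<bar>F x y - F p y\<bar> < 1 / real (Suc m)"
proof -
  define covers where "covers m V ps \<longleftrightarrow> set ps \<subseteq> topspace S \<and> (\<forall>p\<in>set ps. openin S (V p)) \<and>
      topspace S \<subseteq> \<Union>(V ` set ps) \<and>
      (\<forall>p\<in>set ps. \<forall>x\<in>V p. \<forall>y\<in>Y. \<bar>F x y - F p y\<bar> < 1 / real (Suc m))"
    for m :: nat and V :: "'a \<Rightarrow> 'a set" and ps
  have "\<exists>V ps. covers m V ps" for m
  proof -
    obtain V where V: "\<And>x0. x0 \<in> topspace S \<Longrightarrow> openin S (V x0) \<and> x0 \<in> V x0 \<and>
        (\<forall>x\<in>V x0. \<forall>y\<in>Y. \<bar>F x y - F x0 y\<bar> < 1 / real (Suc m))"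
      using eq[of _ "1 / real (Suc m)"] by (metis of_nat_0_less_iff zero_less_Suc zero_less_divide_1_iff)
    obtain \<F> where \<F>: "finite \<F>" "\<F> \<subseteq> V ` topspace S" "topspace S \<subseteq> \<Union>\<F>"
      using S unfolding compact_space_alt
      by (elim allE[of _ "V ` topspace S"]) (use V in blast)
    obtain D where D: "D \<subseteq> topspace S" "finite D" "\<F> = V ` D"
      using finite_subset_image[OF \<F>(1,2)] by blast
    obtain ps where "set ps = D" using finite_list[OF D(2)] by blast
    then have "covers m V ps" using D \<F>(3) V unfolding covers_def by auto
    then show ?thesis by blast
  qed
  then have "\<exists>V. \<forall>m. \<exists>ps. covers m (V m) ps" by (intro choice) blast
  then obtain V where "\<forall>m. \<exists>ps. covers m (V m) ps" ..
  then have "\<exists>ps. \<forall>m. covers m (V m) (ps m)" by (rule choice)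
  then obtain ps where "\<forall>m. covers m (V m) (ps m)" ..
  then show ?thesis
    using that[of ps V] unfolding covers_def by blast
qed

text \<open>The product of Borel \<open>\<sigma>\<close>-algebras may be smaller than the Borel \<open>\<sigma>\<close>-algebra of the product,
  so joint measurability comes from uniform approximation by the step functions \<open>cover_pick\<close>.\<close>

lemma measurable_equicontinuous_family:
  fixes F :: "'a \<Rightarrow> 'c \<Rightarrow> real"
  assumes M: "has_borel_sets S M" and S: "compact_space S"
    and meas: "\<And>x. x \<in> topspace S \<Longrightarrow> F x \<in> borel_measurable N"
    and eq: "\<And>x0 e. x0 \<in> topspace S \<Longrightarrow> e > 0 \<Longrightarrow>
       \<exists>V. openin S V \<and> x0 \<in> V \<and> (\<forall>x\<in>V. \<forall>y\<in>space N. \<bar>F x y - F x0 y\<bar> < e)"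
  shows "case_prod F \<in> borel_measurable (M \<Otimes>\<^sub>M N)"
proof -
  obtain V :: "nat \<Rightarrow> 'a \<Rightarrow> 'a set" and ps where V: "\<And>m. set (ps m) \<subseteq> topspace S"
    "\<And>m p. p \<in> set (ps m) \<Longrightarrow> openin S (V m p)" "\<And>m. topspace S \<subseteq> \<Union>(V m ` set (ps m))"
    "\<And>m p x y. p \<in> set (ps m) \<Longrightarrow> x \<in> V m p \<Longrightarrow> y \<in> space N \<Longrightarrow> \<bar>F x y - F p y\<bar> < 1 / real (Suc m)"
    using compact_space_equicontinuous_covers[OF S eq] by metis
  define f where "f m z = cover_pick (V m) F (ps m) (fst z) (snd z)" for m z
  have "f m \<in> borel_measurable (M \<Otimes>\<^sub>M N)" for m
    unfolding f_def[abs_def]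
  proof (rule cover_pick_measurable)
    fix p assume p: "p \<in> set (ps m)"
    show "V m p \<in> sets M" using has_borel_sets_openin[OF M V(2)[OF p]] .
    show "F p \<in> borel_measurable N" using meas[OF subsetD[OF V(1) p]] .
  qed
  moreover have "(\<lambda>m. f m z) \<longlonglongrightarrow> case_prod F z" if z: "z \<in> space (M \<Otimes>\<^sub>M N)" for z
  proof -
    obtain x y where xy: "z = (x, y)" "x \<in> topspace S" "y \<in> space N"
      using z M by (cases z) (auto simp: space_pair_measure has_borel_sets_def)
    have "norm (f m z - F x y) \<le> 1 / real (Suc m)" for m
    proof -
      have "x \<in> \<Union>(V m ` set (ps m))" using V(3) xy by blast
      then obtain p where p: "p \<in> set (ps m)" "x \<in> V m p" "f m z = F p y"
        unfolding f_def xy fst_conv snd_conv by (metis cover_pick_in_cover)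
      show ?thesis
        using V(4)[OF p(1,2) xy(3)] p(3) by (metis abs_minus_commute less_imp_le real_norm_def)
    qed
    then have "(\<lambda>m. f m z - F x y) \<longlonglongrightarrow> 0"
      by (intro Lim_null_comparison[OF always_eventually LIMSEQ_Suc[OF lim_1_over_n]]) simp
    then show ?thesis
      unfolding xy(1) case_prod_conv by (rule LIM_zero_cancel)
  qed
  ultimately show ?thesis
    by (rule borel_measurable_LIMSEQ_metric)
qed

lemma Fubini_integral_equicontinuous:
  fixes F :: "'a \<Rightarrow> 'c \<Rightarrow> real"
  assumes M: "has_borel_sets S M" "finite_measure M" and S: "compact_space S"
    and N: "finite_measure N"
    and meas: "\<And>x. x \<in> topspace S \<Longrightarrow> F x \<in> borel_measurable N"
    and bound: "\<And>x y. x \<in> topspace S \<Longrightarrow> y \<in> space N \<Longrightarrow> \<bar>F x y\<bar> \<le> B"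
    and eq: "\<And>x0 e. x0 \<in> topspace S \<Longrightarrow> e > 0 \<Longrightarrow>
       \<exists>V. openin S V \<and> x0 \<in> V \<and> (\<forall>x\<in>V. \<forall>y\<in>space N. \<bar>F x y - F x0 y\<bar> < e)"
  shows "(\<integral>y. (\<integral>x. F x y \<partial>M) \<partial>N) = (\<integral>x. (\<integral>y. F x y \<partial>N) \<partial>M)"
proof -
  interpret M: finite_measure M by fact
  interpret N: finite_measure N by fact
  interpret pair_sigma_finite M N ..
  interpret MN: finite_measure "M \<Otimes>\<^sub>M N"
    using finite_measure_pair_measure[OF N M(2)] .
  have "integrable (M \<Otimes>\<^sub>M N) (case_prod F)"
  proof (rule MN.integrable_const_bound[where B=B])
    show "AE z in M \<Otimes>\<^sub>M N. norm (case_prod F z) \<le> B"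
      using bound M(1) by (intro AE_I2) (auto simp: space_pair_measure has_borel_sets_def)
    show "case_prod F \<in> borel_measurable (M \<Otimes>\<^sub>M N)"
      by (rule measurable_equicontinuous_family[OF M(1) S meas eq])
  qed
  then show ?thesis by (rule Fubini_integral)
qed

section \<open>Haar integrals along continuous epimorphisms\<close>

locale haar_epimorphism =
  fixes K :: "('a, 'b) monoid_scheme" (structure) and TK and \<mu>
    and Q :: "('q, 'r) monoid_scheme" and TQ and \<nu> and \<pi>
  assumes tgK: "topological_group K TK" and K: "compact_space TK"
    and \<mu>: "left_invariant_prob K TK \<mu>"
    and tgQ: "topological_group Q TQ" and \<nu>: "left_invariant_prob Q TQ \<nu>"
    and \<pi>: "\<pi> \<in> hom K Q" "\<pi> ` carrier K = carrier Q" "continuous_map TK TQ \<pi>"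
begin

lemma group_hom: "group_hom K Q \<pi>"
  using \<pi>(1) tgK tgQ by (simp add: group_hom_def group_hom_axioms_def topological_group_group)

lemma Fubini_integral_translates:
  assumes f: "continuous_map TQ euclideanreal f"
  shows "(\<integral>y. (\<integral>x. f (inv\<^bsub>Q\<^esub> \<pi> x \<otimes>\<^bsub>Q\<^esub> y) \<partial>\<mu>) \<partial>\<nu>) =
    (\<integral>x. (\<integral>y. f (inv\<^bsub>Q\<^esub> \<pi> x \<otimes>\<^bsub>Q\<^esub> y) \<partial>\<nu>) \<partial>\<mu>)"
proof -
  interpret group_hom K Q \<pi> by (rule group_hom)
  have topK: "topspace TK = carrier K" and topQ: "topspace TQ = carrier Q"
    using tgK tgQ by (simp_all add: topological_group_topspace)
  have spQ: "space \<nu> = carrier Q"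
    using left_invariant_prob_space[OF \<nu> tgQ] .
  obtain B where B: "\<And>y. y \<in> carrier Q \<Longrightarrow> \<bar>f y\<bar> \<le> B"
    using continuous_map_real_bounded[OF compact_space_continuous_surj[OF K \<pi>(3)] f] \<pi>(2) topK topQ
    by metis
  have f\<pi>: "continuous_map TK euclideanreal (\<lambda>x. f (\<pi> x))"
    using continuous_map_compose[OF \<pi>(3) f] by (simp add: o_def)
  show ?thesis
  proof (rule Fubini_integral_equicontinuous[OF _ left_invariant_prob_finite_measure[OF \<mu>] K
        left_invariant_prob_finite_measure[OF \<nu>]])
    show "has_borel_sets TK \<mu>" using left_invariant_prob_has_borel_sets[OF \<mu>] .
  next
    fix x assume "x \<in> topspace TK"
    then have "continuous_map TQ TQ (\<lambda>y. inv\<^bsub>Q\<^esub> \<pi> x \<otimes>\<^bsub>Q\<^esub> y)"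
      using topK by (intro continuous_map_left_translation[OF tgQ]) auto
    from continuous_map_compose[OF this f]
    show "(\<lambda>y. f (inv\<^bsub>Q\<^esub> \<pi> x \<otimes>\<^bsub>Q\<^esub> y)) \<in> borel_measurable \<nu>"
      using continuous_map_borel_measurable[OF left_invariant_prob_has_borel_sets[OF \<nu>]]
      by (simp add: o_def)
  next
    fix x y assume "x \<in> topspace TK" "y \<in> space \<nu>"
    then show "\<bar>f (inv\<^bsub>Q\<^esub> \<pi> x \<otimes>\<^bsub>Q\<^esub> y)\<bar> \<le> B" using topK spQ by (intro B) auto
  next
    fix x0 and e :: real assume x0: "x0 \<in> topspace TK" and e: "e > 0"
    then obtain V where V: "openin TK V" "x0 \<in> V"
      "\<And>x g. x \<in> V \<Longrightarrow> g \<in> carrier K \<Longrightarrow> \<bar>f (\<pi> (inv x \<otimes> g)) - f (\<pi> (inv x0 \<otimes> g))\<bar> < e"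
      using equicontinuous_translates[OF tgK K f\<pi>] topK by metis
    have "\<bar>f (inv\<^bsub>Q\<^esub> \<pi> x \<otimes>\<^bsub>Q\<^esub> y) - f (inv\<^bsub>Q\<^esub> \<pi> x0 \<otimes>\<^bsub>Q\<^esub> y)\<bar> < e"
      if x: "x \<in> V" and y: "y \<in> space \<nu>" for x y
    proof -
      obtain g where "g \<in> carrier K" "y = \<pi> g" using y spQ \<pi>(2) by auto
      moreover have "x \<in> carrier K" using x openin_subset[OF V(1)] topK by auto
      ultimately show ?thesis
        using V(3)[OF x] x0 topK by simp
    qed
    with V(1,2) show "\<exists>V. openin TK V \<and> x0 \<in> V \<and> (\<forall>x\<in>V. \<forall>y\<in>space \<nu>.
        \<bar>f (inv\<^bsub>Q\<^esub> \<pi> x \<otimes>\<^bsub>Q\<^esub> y) - f (inv\<^bsub>Q\<^esub> \<pi> x0 \<otimes>\<^bsub>Q\<^esub> y)\<bar> < e)"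
      by blast
  qed
qed

text \<open>Both iterated integrals of \<open>f (\<pi>(x)\<inverse> y)\<close> are computed by left invariance: integrating
  over \<open>y\<close> first gives \<open>\<integral> f d\<nu>\<close>, integrating over \<open>x\<close> first (with \<open>y = \<pi> g\<close>) gives
  \<open>\<integral> f (\<pi> (x\<inverse>)) d\<mu>\<close>.\<close>

lemma integral_hom_inverse:
  assumes f: "continuous_map TQ euclideanreal f"
  shows "integral\<^sup>L \<nu> f = (\<integral>x. f (\<pi> (inv x)) \<partial>\<mu>)"
proof -
  interpret group_hom K Q \<pi> by (rule group_hom)
  have spK: "space \<mu> = carrier K" and spQ: "space \<nu> = carrier Q"
    using left_invariant_prob_space \<mu> \<nu> tgK tgQ by blast+
  define \<psi> where "\<psi> x = f (\<pi> (inv x))" for x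
  have "continuous_map TK euclideanreal \<psi>"
    using continuous_map_compose[OF continuous_map_compose[OF
          continuous_map_group_inv[OF tgK continuous_map_id] \<pi>(3)] f]
    by (simp add: \<psi>_def[abs_def] o_def)
  then have \<psi>_meas: "\<psi> \<in> borel_measurable \<mu>"
    by (rule continuous_map_borel_measurable[OF left_invariant_prob_has_borel_sets[OF \<mu>]])
  have f_meas: "f \<in> borel_measurable \<nu>"
    using continuous_map_borel_measurable[OF left_invariant_prob_has_borel_sets[OF \<nu>] f] .
  have "(\<integral>x. f (inv\<^bsub>Q\<^esub> \<pi> x \<otimes>\<^bsub>Q\<^esub> y) \<partial>\<mu>) = integral\<^sup>L \<mu> \<psi>" if y: "y \<in> space \<nu>" for y
  proof -
    obtain g where g: "g \<in> carrier K" "y = \<pi> g" using y spQ \<pi>(2) by auto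
    have "(\<integral>x. f (inv\<^bsub>Q\<^esub> \<pi> x \<otimes>\<^bsub>Q\<^esub> y) \<partial>\<mu>) = (\<integral>x. \<psi> (inv g \<otimes> x) \<partial>\<mu>)"
      using g spK by (intro Bochner_Integration.integral_cong) (auto simp: \<psi>_def G.inv_mult_group)
    also have "\<dots> = integral\<^sup>L \<mu> \<psi>"
      using integral_left_translation[OF tgK \<mu> G.inv_closed[OF g(1)] \<psi>_meas] .
    finally show ?thesis .
  qed
  then have "(\<integral>y. (\<integral>x. f (inv\<^bsub>Q\<^esub> \<pi> x \<otimes>\<^bsub>Q\<^esub> y) \<partial>\<mu>) \<partial>\<nu>) = (\<integral>y. integral\<^sup>L \<mu> \<psi> \<partial>\<nu>)"
    by (rule Bochner_Integration.integral_cong[OF refl])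
  also have "\<dots> = integral\<^sup>L \<mu> \<psi>"
    using left_invariant_prob_measure_space[OF \<nu>] by simp
  finally have \<mu>_first: "(\<integral>y. (\<integral>x. f (inv\<^bsub>Q\<^esub> \<pi> x \<otimes>\<^bsub>Q\<^esub> y) \<partial>\<mu>) \<partial>\<nu>) = integral\<^sup>L \<mu> \<psi>" .
  have "(\<integral>y. f (inv\<^bsub>Q\<^esub> \<pi> x \<otimes>\<^bsub>Q\<^esub> y) \<partial>\<nu>) = integral\<^sup>L \<nu> f" if "x \<in> space \<mu>" for x
    using that spK by (intro integral_left_translation[OF tgQ \<nu> _ f_meas]) auto
  then have "(\<integral>x. (\<integral>y. f (inv\<^bsub>Q\<^esub> \<pi> x \<otimes>\<^bsub>Q\<^esub> y) \<partial>\<nu>) \<partial>\<mu>) = (\<integral>x. integral\<^sup>L \<nu> f \<partial>\<mu>)"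
    by (rule Bochner_Integration.integral_cong[OF refl])
  also have "\<dots> = integral\<^sup>L \<nu> f"
    using left_invariant_prob_measure_space[OF \<mu>] by simp
  finally have "integral\<^sup>L \<nu> f = integral\<^sup>L \<mu> \<psi>"
    using Fubini_integral_translates[OF f] \<mu>_first by simp
  then show ?thesis by (simp add: \<psi>_def[abs_def])
qed

lemma integral_hom:
  assumes f: "continuous_map TQ euclideanreal f"
  shows "integral\<^sup>L \<nu> f = (\<integral>x. f (\<pi> x) \<partial>\<mu>)"
proof -
  interpret group K using topological_group_group[OF tgK] .
  \<comment> \<open>for the identity of \<open>K\<close>, \<open>integral_hom_inverse\<close> says that \<open>\<mu>\<close> is invariant under inversion\<close>
  interpret K: haar_epimorphism K TK \<mu> K TK \<mu> "\<lambda>x. x"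
    using tgK K \<mu> id_iso[of K] by unfold_locales (auto simp: iso_def id_def)
  have "(\<integral>x. f (\<pi> x) \<partial>\<mu>) = (\<integral>x. f (\<pi> (inv x)) \<partial>\<mu>)"
    using K.integral_hom_inverse continuous_map_compose[OF \<pi>(3) f] by (simp add: o_def)
  also have "\<dots> = integral\<^sup>L \<nu> f"
    using integral_hom_inverse[OF f] by simp
  finally show ?thesis by simp
qed

lemma measure_le_measure_closed:
  assumes TQ: "normal_space TQ"
    and outer: "\<forall>A\<in>sets \<nu>. emeasure \<nu> A = (INF U\<in>{U. openin TQ U \<and> A \<subseteq> U}. emeasure \<nu> U)"
    and D: "closedin TQ D" and C: "C \<subseteq> carrier K" "\<pi> ` C \<subseteq> D"
  shows "measure \<mu> C \<le> measure \<nu> D"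
proof (cases "C \<in> sets \<mu>")
  case True
  interpret \<mu>: finite_measure \<mu> using left_invariant_prob_finite_measure[OF \<mu>] .
  have B\<mu>: "has_borel_sets TK \<mu>" and B\<nu>: "has_borel_sets TQ \<nu>"
    using \<mu> \<nu> by (simp_all add: left_invariant_prob_has_borel_sets)
  have spK: "space \<mu> = carrier K" using left_invariant_prob_space[OF \<mu> tgK] .
  have topQ: "topspace TQ = carrier Q" using topological_group_topspace[OF tgQ] .
  show ?thesis
  proof (rule field_le_epsilon)
    fix e :: real assume "e > 0"
    with Urysohn_integral_le_measure[OF B\<nu> left_invariant_prob_finite_measure[OF \<nu>] TQ outer D]
    obtain f where f: "continuous_map TQ euclideanreal f" "\<And>y. y \<in> carrier Q \<Longrightarrow> f y \<in> {0..1}"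
        "\<And>y. y \<in> D \<Longrightarrow> f y = 1" "integral\<^sup>L \<nu> f \<le> measure \<nu> D + e"
      unfolding topQ by metis
    have f\<pi>01: "f (\<pi> x) \<in> {0..1}" if "x \<in> space \<mu>" for x
      using f(2) \<pi>(2) that spK by blast
    have "measure \<mu> C = (\<integral>x. indicator C x \<partial>\<mu>)"
      using True sets.sets_into_space[OF True] by (simp add: Int_absorb2)
    also have "\<dots> \<le> (\<integral>x. f (\<pi> x) \<partial>\<mu>)"
    proof (rule integral_mono)
      show "integrable \<mu> (indicator C :: _ \<Rightarrow> real)"
        using True by (intro integrable_real_indicator) (auto simp: \<mu>.emeasure_eq_measure)
      show "integrable \<mu> (\<lambda>x. f (\<pi> x))"
      proof (rule \<mu>.integrable_const_bound[where B=1])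
        show "AE x in \<mu>. norm (f (\<pi> x)) \<le> 1" using f\<pi>01 by (intro AE_I2) fastforce
        show "(\<lambda>x. f (\<pi> x)) \<in> borel_measurable \<mu>"
          using continuous_map_borel_measurable[OF B\<mu> continuous_map_compose[OF \<pi>(3) f(1)]]
          by (simp add: o_def)
      qed
      fix x assume "x \<in> space \<mu>"
      then show "indicator C x \<le> f (\<pi> x)"
        using f\<pi>01 f(3) C by (cases "x \<in> C") auto
    qed
    also have "\<dots> = integral\<^sup>L \<nu> f" using integral_hom[OF f(1)] ..
    finally show "measure \<mu> C \<le> measure \<nu> D + e" using f(4) by simp
  qed
qed (simp add: measure_notin_sets)

end

definition pow_map :: "nat \<Rightarrow> ('a \<Rightarrow> 'c) \<Rightarrow> (nat \<Rightarrow> 'a) \<Rightarrow> (nat \<Rightarrow> 'c)" where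
  "pow_map n h x = (\<lambda>i\<in>{0..n}. h (x i))"

lemma continuous_map_pow_topology_restrict:
  assumes "\<And>i. i \<le> n \<Longrightarrow> continuous_map Z T (g i)"
  shows "continuous_map Z (pow_topology T n) (\<lambda>z. \<lambda>i\<in>{0..n}. g i z)"
  unfolding pow_topology_def continuous_map_componentwise using assms by auto

lemma continuous_map_pow_topology_projection:
  "i \<le> n \<Longrightarrow> continuous_map (pow_topology T n) T (\<lambda>x. x i)"
  unfolding pow_topology_def by (rule continuous_map_product_projection) simp

lemma topspace_pow_topology: "topspace (pow_topology T n) = (\<Pi>\<^sub>E i\<in>{0..n}. topspace T)"
  by (simp add: pow_topology_def)

lemma compact_space_pow_topology: "compact_space T \<Longrightarrow> compact_space (pow_topology T n)"
  by (simp add: pow_topology_def compact_space_product_topology)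

lemma Hausdorff_space_pow_topology: "Hausdorff_space T \<Longrightarrow> Hausdorff_space (pow_topology T n)"
  by (simp add: pow_topology_def Hausdorff_space_product_topology)

lemma topological_group_pow:
  assumes tg: "topological_group G T"
  shows "topological_group (pow_group G n) (pow_topology T n)"
proof -
  have grp: "group G" using topological_group_group[OF tg] .
  have top: "topspace (pow_topology T n) = carrier (pow_group G n)"
    using topological_group_topspace[OF tg] by (simp add: topspace_pow_topology pow_group_def)
  let ?P = "pow_topology T n"
  have "continuous_map (prod_topology ?P ?P) ?P (\<lambda>z. \<lambda>i\<in>{0..n}. fst z i \<otimes>\<^bsub>G\<^esub> snd z i)"
    by (intro continuous_map_pow_topology_restrict continuous_map_group_mult[OF tg]
        continuous_map_compose[OF continuous_map_fst continuous_map_pow_topology_projection, unfolded o_def]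
        continuous_map_compose[OF continuous_map_snd continuous_map_pow_topology_projection, unfolded o_def])
  then have mult: "continuous_map (prod_topology ?P ?P) ?P (\<lambda>(x, y). x \<otimes>\<^bsub>pow_group G n\<^esub> y)"
    by (simp add: pow_group_def case_prod_beta')
  have "continuous_map ?P ?P (\<lambda>x. \<lambda>i\<in>{0..n}. inv\<^bsub>G\<^esub> x i)"
    by (intro continuous_map_pow_topology_restrict continuous_map_group_inv[OF tg]
        continuous_map_pow_topology_projection)
  then have inv: "continuous_map ?P ?P (\<lambda>x. inv\<^bsub>pow_group G n\<^esub> x)"
    by (rule continuous_map_eq) (use top grp in \<open>simp add: pow_group_def\<close>)
  show ?thesis
    unfolding topological_group_def using grp top mult inv by (simp add: pow_group_def)
qed

lemma hom_pow_map:
  assumes "h \<in> hom G H"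
  shows "pow_map n h \<in> hom (pow_group G n) (pow_group H n)"
  using assms by (auto simp: hom_def pow_group_def pow_map_def PiE_iff intro!: restrict_ext)

lemma pow_map_image_carrier:
  assumes "h ` carrier G = carrier H"
  shows "pow_map n h ` carrier (pow_group G n) = carrier (pow_group H n)"
proof (intro equalityI subsetI)
  fix z assume "z \<in> pow_map n h ` carrier (pow_group G n)"
  then show "z \<in> carrier (pow_group H n)"
    using assms by (force simp: pow_group_def pow_map_def)
next
  fix z assume z: "z \<in> carrier (pow_group H n)"
  then have "\<forall>i\<in>{0..n}. \<exists>a\<in>carrier G. z i = h a"
    using assms by (auto simp: pow_group_def)
  then obtain a where a: "\<forall>i\<in>{0..n}. a i \<in> carrier G \<and> z i = h (a i)"
    by metis
  have "pow_map n h (restrict a {0..n}) = z"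
    using a z by (auto simp: pow_map_def pow_group_def PiE_iff intro!: extensionalityI[of _ "{0..n}"])
  moreover have "restrict a {0..n} \<in> carrier (pow_group G n)"
    using a by (simp add: pow_group_def)
  ultimately show "z \<in> pow_map n h ` carrier (pow_group G n)" by blast
qed

lemma continuous_map_pow_map:
  "continuous_map T T' h \<Longrightarrow> continuous_map (pow_topology T n) (pow_topology T' n) (pow_map n h)"
  unfolding pow_map_def
  by (intro continuous_map_pow_topology_restrict
      continuous_map_compose[OF continuous_map_pow_topology_projection, unfolded o_def])

section \<open>Quotient groups\<close>

context
  fixes G :: "('a, 'b) monoid_scheme" (structure) and T :: "'a topology" and N :: "'a set"
  assumes tg: "topological_group G T" and nN: "N \<lhd> G"
begin

interpretation normal N G by (rule nN)

lemma istopology_quot: "istopology (\<lambda>U. U \<subseteq> rcosets N \<and> openin T (\<Union>U))"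
  unfolding istopology_def
proof (intro conjI allI impI)
  fix S S' assume S: "S \<subseteq> rcosets N \<and> openin T (\<Union>S)" and S': "S' \<subseteq> rcosets N \<and> openin T (\<Union>S')"
  have "\<Union>(S \<inter> S') = \<Union>S \<inter> \<Union>S'"
  proof
    show "\<Union>S \<inter> \<Union>S' \<subseteq> \<Union>(S \<inter> S')"
    proof
      fix x assume "x \<in> \<Union>S \<inter> \<Union>S'"
      then obtain A B where AB: "A \<in> S" "B \<in> S'" "x \<in> A" "x \<in> B" by blast
      then have "A = B"
        using rcos_disjoint[OF subgroup_axioms] S S' unfolding pairwise_def disjnt_def by blast
      then show "x \<in> \<Union>(S \<inter> S')" using AB by blast
    qed
  qed blast
  then show "openin T (\<Union>(S \<inter> S'))" using S S' by auto
  show "S \<inter> S' \<subseteq> rcosets N" using S by auto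
next
  fix \<K> assume "\<forall>S\<in>\<K>. S \<subseteq> rcosets N \<and> openin T (\<Union>S)"
  moreover have "\<Union>(\<Union>\<K>) = \<Union>(Union ` \<K>)" by blast
  ultimately show "openin T (\<Union>(\<Union>\<K>))" "\<Union>\<K> \<subseteq> rcosets N" by auto
qed

lemma openin_quot_topology:
  "openin (quot_topology G T N) W \<longleftrightarrow> W \<subseteq> rcosets N \<and> openin T (\<Union>W)"
  unfolding quot_topology_def using topology_inverse'[OF istopology_quot] by simp

lemma topspace_quot_topology: "topspace (quot_topology G T N) = rcosets N"
proof -
  have "openin (quot_topology G T N) (rcosets N)"
    unfolding openin_quot_topology
    using rcosets_part_G[OF subgroup_axioms] topological_group_topspace[OF tg] openin_topspace[of T]
    by auto
  then show ?thesis
    using openin_subset unfolding topspace_def openin_quot_topology by blast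
qed

lemma rcoset_image_topspace: "(\<lambda>a. N #> a) ` topspace T = topspace (quot_topology G T N)"
  using topological_group_topspace[OF tg] by (auto simp: topspace_quot_topology RCOSETS_def)

lemma rcoset_preimage_eq_Union: "W \<subseteq> rcosets N \<Longrightarrow> {a \<in> carrier G. N #> a \<in> W} = \<Union>W"
proof safe
  fix a assume "a \<in> carrier G" "N #> a \<in> W"
  then show "a \<in> \<Union>W" using rcos_self[OF _ subgroup_axioms] by blast
next
  fix a A assume W: "W \<subseteq> rcosets N" and A: "A \<in> W" "a \<in> A"
  then obtain b where b: "b \<in> carrier G" "A = N #> b" unfolding RCOSETS_def by blast
  then show "a \<in> carrier G" using A(2) r_coset_subset_G[OF subset b(1)] by blast
  have "N #> b = N #> a" using repr_independence[OF _ b(1) subgroup_axioms] A b by blast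
  then show "N #> a \<in> W" using A b by simp
qed

lemma continuous_map_rcoset: "continuous_map T (quot_topology G T N) (\<lambda>a. N #> a)"
  unfolding continuous_map_def
proof (intro conjI allI impI)
  show "(\<lambda>a. N #> a) \<in> topspace T \<rightarrow> topspace (quot_topology G T N)"
    using rcoset_image_topspace by blast
  fix W assume "openin (quot_topology G T N) W"
  then show "openin T {x \<in> topspace T. N #> x \<in> W}"
    using rcoset_preimage_eq_Union topological_group_topspace[OF tg]
    by (simp add: openin_quot_topology)
qed

lemma open_map_rcoset: "open_map T (quot_topology G T N) (\<lambda>a. N #> a)"
  unfolding open_map_def
proof (intro allI impI)
  fix U assume U: "openin T U"
  have "\<Union>((\<lambda>a. N #> a) ` U) = (\<Union>h\<in>N. (\<lambda>x. h \<otimes> x) ` U)"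
    unfolding r_coset_def by blast
  moreover have "openin T (\<Union>h\<in>N. (\<lambda>x. h \<otimes> x) ` U)"
    using openin_left_translation[OF tg U] by (auto intro!: openin_Union)
  moreover have "(\<lambda>a. N #> a) ` U \<subseteq> rcosets N"
    using openin_subset[OF U] topological_group_topspace[OF tg] by (auto simp: RCOSETS_def)
  ultimately show "openin (quot_topology G T N) ((\<lambda>a. N #> a) ` U)"
    by (simp add: openin_quot_topology)
qed

lemma quotient_map_rcoset: "quotient_map T (quot_topology G T N) (\<lambda>a. N #> a)"
  by (rule continuous_open_imp_quotient_map[OF continuous_map_rcoset open_map_rcoset rcoset_image_topspace])

lemma quotient_map_rcoset_pair:
  "quotient_map (prod_topology T T) (prod_topology (quot_topology G T N) (quot_topology G T N))
     (\<lambda>(a, b). (N #> a, N #> b))"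
proof (rule continuous_open_imp_quotient_map)
  show "continuous_map (prod_topology T T) (prod_topology (quot_topology G T N) (quot_topology G T N))
     (\<lambda>(a, b). (N #> a, N #> b))"
    using continuous_map_of_fst[of T T _ "\<lambda>a. N #> a"] continuous_map_of_snd[of T T _ "\<lambda>a. N #> a"]
      continuous_map_rcoset
    by (simp add: case_prod_beta' continuous_map_paired o_def)
  show "open_map (prod_topology T T) (prod_topology (quot_topology G T N) (quot_topology G T N))
     (\<lambda>(a, b). (N #> a, N #> b))"
    by (rule open_map_prod[OF open_map_rcoset open_map_rcoset])
  show "(\<lambda>(a, b). (N #> a, N #> b)) ` topspace (prod_topology T T) =
      topspace (prod_topology (quot_topology G T N) (quot_topology G T N))"
    by (simp add: image_paired_Times rcoset_image_topspace)
qed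

lemma topological_group_quot: "topological_group (G Mod N) (quot_topology G T N)"
  unfolding topological_group_def
proof (intro conjI)
  have top: "topspace T = carrier G" using topological_group_topspace[OF tg] .
  show "group (G Mod N)" by (rule factorgroup_is_group)
  show "topspace (quot_topology G T N) = carrier (G Mod N)"
    by (simp add: topspace_quot_topology FactGroup_def)
  have "continuous_map (prod_topology T T) (quot_topology G T N) (\<lambda>z. N #> (fst z \<otimes> snd z))"
    using continuous_map_compose[OF continuous_map_group_mult[OF tg continuous_map_fst continuous_map_snd]
        continuous_map_rcoset]
    by (simp add: o_def)
  then have "continuous_map (prod_topology T T) (quot_topology G T N)
      ((\<lambda>(x, y). x \<otimes>\<^bsub>G Mod N\<^esub> y) \<circ> (\<lambda>(a, b). (N #> a, N #> b)))"
    by (rule continuous_map_eq) (use top in \<open>auto simp: rcos_sum\<close>)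
  then show "continuous_map (prod_topology (quot_topology G T N) (quot_topology G T N))
      (quot_topology G T N) (\<lambda>(x, y). x \<otimes>\<^bsub>G Mod N\<^esub> y)"
    by (rule continuous_compose_quotient_map[OF quotient_map_rcoset_pair])
  have "continuous_map T (quot_topology G T N) (\<lambda>a. N #> inv a)"
    using continuous_map_compose[OF continuous_map_group_inv[OF tg continuous_map_id] continuous_map_rcoset]
    by (simp add: o_def)
  then have "continuous_map T (quot_topology G T N) ((\<lambda>x. inv\<^bsub>G Mod N\<^esub> x) \<circ> (\<lambda>a. N #> a))"
  proof (rule continuous_map_eq)
    fix a assume "a \<in> topspace T"
    moreover have "N #> a \<in> carrier (G Mod N)" if "a \<in> carrier G"
      using that by (auto simp: FactGroup_def RCOSETS_def)
    ultimately show "N #> inv a = ((\<lambda>x. inv\<^bsub>G Mod N\<^esub> x) \<circ> (\<lambda>a. N #> a)) a"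
      using top by (simp add: inv_FactGroup rcos_inv)
  qed
  then show "continuous_map (quot_topology G T N) (quot_topology G T N) (\<lambda>x. inv\<^bsub>G Mod N\<^esub> x)"
    by (rule continuous_compose_quotient_map[OF quotient_map_rcoset])
qed

lemma compact_space_quot_topology: "compact_space T \<Longrightarrow> compact_space (quot_topology G T N)"
  using compact_space_continuous_surj[OF _ continuous_map_rcoset rcoset_image_topspace] .

text \<open>Distinct cosets \<open>N a \<noteq> N b\<close> have representatives with \<open>a b\<inverse>\<close> in the open set \<open>G - N\<close>; a
  product neighbourhood \<open>U \<times> V\<close> of \<open>(a, b)\<close> on which \<open>u v\<inverse> \<notin> N\<close> maps to disjoint open sets.\<close>

lemma Hausdorff_space_quot_topology:
  assumes cl: "closedin T N"
  shows "Hausdorff_space (quot_topology G T N)"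
  unfolding Hausdorff_space_def
proof (intro allI impI)
  have top: "topspace T = carrier G" using topological_group_topspace[OF tg] .
  fix A B assume AB: "A \<in> topspace (quot_topology G T N) \<and> B \<in> topspace (quot_topology G T N) \<and> A \<noteq> B"
  then obtain a b where ab: "a \<in> carrier G" "b \<in> carrier G" "A = N #> a" "B = N #> b"
    by (auto simp: topspace_quot_topology RCOSETS_def)
  define W where "W = {z \<in> topspace (prod_topology T T). fst z \<otimes> inv (snd z) \<in> topspace T - N}"
  have "continuous_map (prod_topology T T) T (\<lambda>z. fst z \<otimes> inv (snd z))"
    by (intro continuous_map_group_mult[OF tg] continuous_map_group_inv[OF tg]
        continuous_map_fst continuous_map_snd)
  then have "openin (prod_topology T T) W"
    unfolding W_def using cl by (intro openin_continuous_map_preimage) blast+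
  moreover have ab_W: "(a, b) \<in> W"
  proof -
    have "a \<otimes> inv b \<notin> N"
    proof
      assume "a \<otimes> inv b \<in> N"
      then have "a \<in> N #> b" using rcos_module_rev[OF is_group ab(2,1)] by simp
      then show False using repr_independence[OF _ ab(2) subgroup_axioms] AB ab by simp
    qed
    then show ?thesis using ab top by (simp add: W_def)
  qed
  ultimately obtain U V where UV: "openin T U" "openin T V" "a \<in> U" "b \<in> V" "U \<times> V \<subseteq> W"
    unfolding openin_prod_topology_alt by (metis ab_W)
  show "\<exists>U V. openin (quot_topology G T N) U \<and> openin (quot_topology G T N) V \<and>
      A \<in> U \<and> B \<in> V \<and> disjnt U V"
  proof (intro exI conjI)
    show "openin (quot_topology G T N) ((\<lambda>a. N #> a) ` U)" "openin (quot_topology G T N) ((\<lambda>a. N #> a) ` V)"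
      using open_map_rcoset UV by (auto simp: open_map_def)
    show "A \<in> (\<lambda>a. N #> a) ` U" "B \<in> (\<lambda>a. N #> a) ` V" using ab UV by auto
    show "disjnt ((\<lambda>a. N #> a) ` U) ((\<lambda>a. N #> a) ` V)"
      unfolding disjnt_def
    proof (rule ccontr)
      assume "(\<lambda>a. N #> a) ` U \<inter> (\<lambda>a. N #> a) ` V \<noteq> {}"
      then obtain u v where uv: "u \<in> U" "v \<in> V" "N #> u = N #> v" by blast
      have u: "u \<in> carrier G" and v: "v \<in> carrier G"
        using uv UV openin_subset top by blast+
      then have "u \<in> N #> v" using uv(3) rcos_self[OF u subgroup_axioms] by simp
      then have "u \<otimes> inv v \<in> N" using rcos_module_imp[OF is_group v] by simp
      moreover have "(u, v) \<in> W" using uv UV by blast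
      ultimately show False by (simp add: W_def)
    qed
  qed
qed

end

section \<open>Iterated commutators\<close>

lemma iter_comm_cong: "(\<And>i. i \<le> k \<Longrightarrow> x i = y i) \<Longrightarrow> iter_comm G x k = iter_comm G y k"
  by (induction k) auto

lemma iter_comm_closed:
  assumes "group G" "\<And>i. i \<le> k \<Longrightarrow> x i \<in> carrier G"
  shows "iter_comm G x k \<in> carrier G"
  using assms(2) by (induction k) (simp_all add: comm_def group.inv_closed[OF assms(1)]
      monoid.m_closed[OF group.is_monoid[OF assms(1)]])

lemma (in group_hom) hom_iter_comm:
  "(\<And>i. i \<le> k \<Longrightarrow> x i \<in> carrier G) \<Longrightarrow> h (iter_comm G x k) = iter_comm H (\<lambda>i. h (x i)) k"
proof (induction k)
  case (Suc k)
  have "iter_comm G x k \<in> carrier G" using iter_comm_closed[OF G.is_group] Suc.prems by simp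
  then show ?case using Suc by (simp add: comm_def)
qed simp

lemma (in group_hom) iter_comm_pow_map:
  "x \<in> carrier (pow_group G n) \<Longrightarrow> iter_comm H (pow_map n h x) n = h (iter_comm G x n)"
  by (subst hom_iter_comm) (auto simp: pow_group_def pow_map_def intro: iter_comm_cong)

lemma continuous_map_iter_comm:
  assumes tg: "topological_group G T" and "k \<le> n"
  shows "continuous_map (pow_topology T n) T (\<lambda>x. iter_comm G x k)"
  using assms(2)
  by (induction k) (simp_all add: comm_def continuous_map_pow_topology_projection
      continuous_map_group_mult[OF tg] continuous_map_group_inv[OF tg])

lemma closedin_iter_comm_eq_one:
  assumes tg: "topological_group G T" and "t1_space T"
  shows "closedin (pow_topology T n) {x \<in> carrier (pow_group G n). iter_comm G x n = \<one>\<^bsub>G\<^esub>}"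
proof -
  have "closedin T {\<one>\<^bsub>G\<^esub>}"
    using assms monoid.one_closed[OF group.is_monoid[OF topological_group_group[OF tg]]]
    by (simp add: closedin_t1_singleton topological_group_topspace)
  from closedin_continuous_map_preimage[OF continuous_map_iter_comm[OF tg order_refl] this]
  show ?thesis
    using topological_group_topspace[OF topological_group_pow[OF tg]] by simp
qed

theorem comm_degree_le_surjective_hom:
  assumes G: "compact_group G T" and H: "compact_group H TH"
    and h: "h \<in> hom G H" "h ` carrier G = carrier H" "continuous_map T TH h"
    and \<mu>: "haar_measure (pow_group G n) (pow_topology T n) \<mu>"
    and \<nu>: "haar_measure (pow_group H n) (pow_topology TH n) \<nu>"
  shows "comm_degree G n \<mu> \<le> comm_degree H n \<nu>"
proof -
  have tgG: "topological_group G T" and tgH: "topological_group H TH"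
    using G H by (simp_all add: compact_group_def)
  interpret group_hom G H h
    using h(1) topological_group_group[OF tgG] topological_group_group[OF tgH]
    by (simp add: group_hom_def group_hom_axioms_def)
  interpret E: haar_epimorphism "pow_group G n" "pow_topology T n" \<mu>
      "pow_group H n" "pow_topology TH n" \<nu> "pow_map n h"
    using G tgG tgH h \<mu> \<nu>
    by unfold_locales (auto simp: compact_group_def haar_measure_left_invariant_prob
        topological_group_pow compact_space_pow_topology hom_pow_map pow_map_image_carrier
        continuous_map_pow_map)
  have "normal_space (pow_topology TH n)"
    using H compact_space_pow_topology Hausdorff_space_pow_topology
    by (intro compact_Hausdorff_or_regular_imp_normal_space) (auto simp: compact_group_def)
  moreover have "closedin (pow_topology TH n) {y \<in> carrier (pow_group H n). iter_comm H y n = \<one>\<^bsub>H\<^esub>}"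
    using H tgH by (intro closedin_iter_comm_eq_one) (simp_all add: compact_group_def Hausdorff_imp_t1_space)
  moreover have "pow_map n h ` {x \<in> carrier (pow_group G n). iter_comm G x n = \<one>\<^bsub>G\<^esub>}
      \<subseteq> {y \<in> carrier (pow_group H n). iter_comm H y n = \<one>\<^bsub>H\<^esub>}"
    using hom_pow_map[OF h(1)] by (auto simp: iter_comm_pow_map hom_def)
  ultimately show ?thesis
    unfolding comm_degree_def using \<nu>
    by (intro E.measure_le_measure_closed) (auto simp: haar_measure_def)
qed

theorem corollary3p6:
  fixes G :: "('a, 'b) monoid_scheme" and T :: "'a topology" and N :: "'a set" and n :: nat
    and \<mu> :: "(nat \<Rightarrow> 'a) measure" and \<nu> :: "(nat \<Rightarrow> 'a set) measure"
  assumes "compact_group G T"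
    and "N \<lhd> G"
    and "closedin T N"
    and "n \<ge> 1"
    and "haar_measure (pow_group G n) (pow_topology T n) \<mu>"
    and "haar_measure (pow_group (G Mod N) n) (pow_topology (quot_topology G T N) n) \<nu>"
  shows "comm_degree G n \<mu> \<le> comm_degree (G Mod N) n \<nu>"
proof (rule comm_degree_le_surjective_hom)
  interpret normal N G by fact
  have tg: "topological_group G T" and T: "compact_space T"
    using assms(1) by (simp_all add: compact_group_def)
  show "compact_group (G Mod N) (quot_topology G T N)"
    unfolding compact_group_def
    using topological_group_quot compact_space_quot_topology Hausdorff_space_quot_topology
      tg T assms(2,3) by blast
  show "(\<lambda>a. N #>\<^bsub>G\<^esub> a) \<in> hom G (G Mod N)" by (rule r_coset_hom_Mod)
  show "(\<lambda>a. N #>\<^bsub>G\<^esub> a) ` carrier G = carrier (G Mod N)"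
    by (auto simp: FactGroup_def RCOSETS_def)
  show "continuous_map T (quot_topology G T N) (\<lambda>a. N #>\<^bsub>G\<^esub> a)"
    using continuous_map_rcoset tg assms(2) by blast
qed (fact assms)+

end
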